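(* Suppose $\|\nabla f(w;z)\|\le G$ for all $w\in\mathcal{K}$, $z\in\Omega$. Let $M\in\mathbb{N}$, $K\in\{1,\dots,M\}$ and $n=\lfloor M/K\rfloor$. Then for every $\delta>(K(n-1)+1)d_{\mathrm{mix}}(K)$ and every $w_t\in\mathcal{K}$ that is $\mathcal{F}_{t-1}$-measurable, \[ \mathbb{P}_{t-1}\Big(\Big\|\frac1M\sum_{i=1}^M\nabla f(w_t;z_t^{(K+i)})-\nabla F(w_t)\Big\|\le\frac{6G}{\sqrt n}\Big(1+\sqrt{\log(K/\delta')}\Big)+\frac{2GK}{M}\Big)\ge1-\delta, \] where $\delta'=\delta-(K(n-1)+1)d_{\mathrm{mix}}(K)$.
   Context: Let $\Omega$ be a finite set and $(z_k)_{k\ge1}$ an ergodic time-homogeneous Markov chain on $\Omega$ (arbitrary, not necessarily stationary, initial distribution) with stationary distribution $\mu$. For probability measures $P,Q$ on $\Omega$, $\|P-Q\|_{TV}=\sup_A|P(A)-Q(A)|$; $P^s(z,\cdot)$ is the law of $z_{s+1}$ given $z_1=z$, and $d_{\mathrm{mix}}(s)=\sup_z\|P^s(z,\cdot)-\mu\|_{TV}$. $\mathcal{K}\subseteq\mathbb{R}^d$; $f(\cdot;z)$ is differentiable and $F(w)=\mathbb{E}_{z\sim\mu}[f(w;z)]$. Samples are grouped by iterations: positive integers $N_1,N_2,\dots$ are drawn independently of the chain (each $N_s=2^{J_s}$ with $\mathbb{P}(J_s=j)=2^{-j}$, $j\ge 1$, independently), and $z_t^{(i)}=z_{S_{t-1}+i}$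 for $i\ge1$, where $S_{t-1}=N_1+\dots+N_{t-1}$. $\mathcal{F}_{t-1}$ is the $\sigma$-field generated by $N_1,\dots,N_{t-1}$ and the samples $z_s^{(i)}$, $s\le t-1$, $i\le N_s$; $\mathbb{P}_{t-1}$ is conditional probability given $\mathcal{F}_{t-1}$ (the inequality holds almost surely). $\log$ is the natural logarithm. *)

theory Defs
  imports "HOL-Probability.Probability"
begin

fun mpow :: "('s::finite \<Rightarrow> 's \<Rightarrow> real) \<Rightarrow> nat \<Rightarrow> 's \<Rightarrow> 's \<Rightarrow> real" where
  "mpow P 0 x y = (if x = y then 1 else 0)"
| "mpow P (Suc s) x y = (\<Sum>u\<in>UNIV. mpow P s x u * P u y)"

definition stochastic :: "('s::finite \<Rightarrow> 's \<Rightarrow> real) \<Rightarrow> bool" where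
  "stochastic P \<longleftrightarrow> (\<forall>x y. 0 \<le> P x y) \<and> (\<forall>x. (\<Sum>y\<in>UNIV. P x y) = 1)"

definition irreducible_chain :: "('s::finite \<Rightarrow> 's \<Rightarrow> real) \<Rightarrow> bool" where
  "irreducible_chain P \<longleftrightarrow> (\<forall>x y. \<exists>n>0. mpow P n x y > 0)"

definition aperiodic_chain :: "('s::finite \<Rightarrow> 's \<Rightarrow> real) \<Rightarrow> bool" where
  "aperiodic_chain P \<longleftrightarrow> (\<forall>x. Gcd {n. n > 0 \<and> mpow P n x x > 0} = 1)"

definition ergodic_chain :: "('s::finite \<Rightarrow> 's \<Rightarrow> real) \<Rightarrow> bool" where
  "ergodic_chain P \<longleftrightarrow> stochastic P \<and> irreducible_chain P \<and> aperiodic_chain P"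

definition stationary_dist :: "('s::finite \<Rightarrow> 's \<Rightarrow> real) \<Rightarrow> ('s \<Rightarrow> real) \<Rightarrow> bool" where
  "stationary_dist P mu \<longleftrightarrow> (\<forall>x. 0 \<le> mu x) \<and> (\<Sum>x\<in>UNIV. mu x) = 1 \<and>
     (\<forall>y. (\<Sum>x\<in>UNIV. mu x * P x y) = mu y)"

definition tv_dist :: "('s::finite \<Rightarrow> real) \<Rightarrow> ('s \<Rightarrow> real) \<Rightarrow> real" where
  "tv_dist p q = Max ((\<lambda>A. \<bar>(\<Sum>x\<in>A. p x) - (\<Sum>x\<in>A. q x)\<bar>) ` (UNIV :: 's set set))"

definition d_mix :: "('s::finite \<Rightarrow> 's \<Rightarrow> real) \<Rightarrow> ('s \<Rightarrow> real) \<Rightarrow> nat \<Rightarrow> real" where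
  "d_mix P mu s = Max ((\<lambda>x. tv_dist (mpow P s x) mu) ` (UNIV :: 's set))"

text \<open>Time-homogeneous Markov chain z_1, z_2, ... (index from 1) with transition matrix P
  on the probability space M, arbitrary initial distribution.\<close>
definition markov_chain_on :: "'a measure \<Rightarrow> ('s::finite \<Rightarrow> 's \<Rightarrow> real) \<Rightarrow> (nat \<Rightarrow> 'a \<Rightarrow> 's) \<Rightarrow> bool" where
  "markov_chain_on M P z \<longleftrightarrow>
     (\<forall>k\<ge>1. z k \<in> measurable M (count_space UNIV)) \<and>
     (\<forall>k\<ge>1. \<forall>xs :: nat \<Rightarrow> 's.
        measure M {\<omega>\<in>space M. \<forall>i\<in>{1..Suc k}. z i \<omega> = xs i}
        = measure M {\<omega>\<in>space M. \<forall>i\<in>{1..k}. z i \<omega> = xs i} * P (xs k) (xs (Suc k)))"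

text \<open>Batch sizes N_1, N_2, ...: N_s = 2^J_s with P(J_s = j) = 2^-j (j >= 1), the N_s mutually
  independent and independent of the chain (joint pmf factorisation).\<close>
definition batch_sizes :: "'a measure \<Rightarrow> (nat \<Rightarrow> 'a \<Rightarrow> 's) \<Rightarrow> (nat \<Rightarrow> 'a \<Rightarrow> nat) \<Rightarrow> bool" where
  "batch_sizes M z N \<longleftrightarrow>
     (\<forall>s\<ge>1. N s \<in> measurable M (count_space UNIV)) \<and>
     (\<forall>s\<ge>1. \<forall>j\<ge>1. measure M {\<omega>\<in>space M. N s \<omega> = 2 ^ j} = 1 / 2 ^ j) \<and>
     (\<forall>k m. \<forall>xs :: nat \<Rightarrow> 's. \<forall>ns :: nat \<Rightarrow> nat.
        measure M {\<omega>\<in>space M. (\<forall>i\<in>{1..k}. z i \<omega> = xs i) \<and> (\<forall>s\<in>{1..m}. N s \<omega> = ns s)}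
        = measure M {\<omega>\<in>space M. \<forall>i\<in>{1..k}. z i \<omega> = xs i} *
          (\<Prod>s\<in>{1..m}. measure M {\<omega>\<in>space M. N s \<omega> = ns s}))"

definition S_before :: "(nat \<Rightarrow> 'a \<Rightarrow> nat) \<Rightarrow> nat \<Rightarrow> 'a \<Rightarrow> nat" where
  "S_before N t \<omega> = (\<Sum>s\<in>{1..<t}. N s \<omega>)"

text \<open>F_{t-1}: sigma-field generated by N_1..N_{t-1} and the samples z_1, ..., z_{S_{t-1}}
  (i.e. all z_s^(i), s <= t-1, i <= N_s), all discrete.\<close>
definition hist_sigma :: "'a measure \<Rightarrow> (nat \<Rightarrow> 'a \<Rightarrow> 's) \<Rightarrow> (nat \<Rightarrow> 'a \<Rightarrow> nat) \<Rightarrow> nat \<Rightarrow> 'a measure" where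
  "hist_sigma M z N t = vimage_algebra (space M)
     (\<lambda>\<omega>. (map (\<lambda>s. N s \<omega>) [1..<t], map (\<lambda>k. z k \<omega>) [1..<Suc (S_before N t \<omega>)]))
     (count_space UNIV)"

end

(*
  Conditionally on the history up to iteration t - 1, the parameter w_t is fixed and, by the
  Markov property, the states following the history form a path of the chain. Split the m
  gradients at the samples z_t^(K+1), ..., z_t^(K+m) into K interleaved subsequences of
  stride K, plus at most K - 1 leftover terms of norm at most 2G. Each subsequence is a chain
  with kernel P^K; coupling it step by step with i.i.d. samples from mu costs d_mix(K) per
  step, and for i.i.d. bounded mean-zero vectors Pinelis' smoothed norm sqrt (|s|^2 + A)
  gives a sub-Gaussian tail for the norm of the sum. A union bound over the K subsequences
  bounds the average with probability 1 - delta from every starting state; as the history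
  takes countably many values, this lower bound on each of its atoms is an almost sure lower
  bound on the conditional probability.
*)

theory Submission
  imports Defs
begin

section \<open>Expectations along paths of a finite Markov chain\<close>

text \<open>\<open>chain_exp Q k F x\<close> is the expectation of \<open>F\<close> applied to the next \<open>k\<close> states of a chain
  with kernel \<open>Q\<close> started at \<open>x\<close> (the start excluded). With a constant kernel \<open>\<lambda>_. p\<close> it is
  the expectation over \<open>k\<close> i.i.d.\ samples from \<open>p\<close>, and \<open>x\<close> is irrelevant.\<close>

fun chain_exp :: "('s::finite \<Rightarrow> 's \<Rightarrow> real) \<Rightarrow> nat \<Rightarrow> ('s list \<Rightarrow> real) \<Rightarrow> 's \<Rightarrow> real" where
  "chain_exp Q 0 F x = F []"
| "chain_exp Q (Suc k) F x = (\<Sum>y\<in>UNIV. Q x y * chain_exp Q k (\<lambda>ys. F (y # ys)) y)"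

lemma chain_exp_mono:
  assumes "\<And>x y. 0 \<le> Q x y" and "\<And>ys. length ys = k \<Longrightarrow> F ys \<le> F' ys"
  shows "chain_exp Q k F x \<le> chain_exp Q k F' x"
  using assms(2)
proof (induction k arbitrary: F F' x)
  case (Suc k)
  show ?case unfolding chain_exp.simps
    by (intro sum_mono mult_left_mono Suc.IH Suc.prems assms(1)) auto
qed simp

lemma chain_exp_cong:
  assumes "\<And>ys. length ys = k \<Longrightarrow> F ys = F' ys"
  shows "chain_exp Q k F x = chain_exp Q k F' x"
  using assms
proof (induction k arbitrary: F F' x)
  case (Suc k)
  show ?case unfolding chain_exp.simps
    by (intro sum.cong refl arg_cong2[where f="(*)"] Suc.IH Suc.prems) auto
qed simp

lemma chain_exp_const:
  assumes "stochastic Q"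
  shows "chain_exp Q k (\<lambda>_. c) x = c"
proof (induction k arbitrary: x)
  case (Suc k)
  have "(\<Sum>y\<in>UNIV. Q x y * c) = c"
    using assms unfolding stochastic_def by (simp flip: sum_distrib_right)
  then show ?case using Suc by simp
qed simp

lemma chain_exp_add:
  "chain_exp Q k (\<lambda>ys. F ys + F' ys) x = chain_exp Q k F x + chain_exp Q k F' x"
  by (induction k arbitrary: F F' x) (simp_all add: distrib_left sum.distrib)

lemma chain_exp_diff:
  "chain_exp Q k (\<lambda>ys. F ys - F' ys) x = chain_exp Q k F x - chain_exp Q k F' x"
  by (induction k arbitrary: F F' x) (simp_all add: right_diff_distrib sum_subtractf)

lemma chain_exp_cmult: "chain_exp Q k (\<lambda>ys. c * F ys) x = c * chain_exp Q k F x"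
  by (induction k arbitrary: F x) (simp_all add: sum_distrib_left algebra_simps)

lemma chain_exp_sum:
  assumes "finite J"
  shows "chain_exp Q k (\<lambda>ys. \<Sum>j\<in>J. F j ys) x = (\<Sum>j\<in>J. chain_exp Q k (F j) x)"
  using assms
proof (induction J rule: finite_induct)
  case empty
  show ?case using chain_exp_cmult[of Q k 0 "\<lambda>_. 0" x] by simp
qed (simp add: chain_exp_add)

lemma chain_exp_bounds:
  assumes Q: "stochastic Q" and "\<And>ys. 0 \<le> F ys \<and> F ys \<le> 1"
  shows "0 \<le> chain_exp Q k F x \<and> chain_exp Q k F x \<le> 1"
proof -
  have Q0: "\<And>x y. 0 \<le> Q x y" using Q unfolding stochastic_def by auto
  have "chain_exp Q k (\<lambda>_. 0) x \<le> chain_exp Q k F x" "chain_exp Q k F x \<le> chain_exp Q k (\<lambda>_. 1) x"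
    using assms(2) by (intro chain_exp_mono[OF Q0]; simp)+
  then show ?thesis by (simp add: chain_exp_const[OF Q])
qed

lemma chain_exp_union_bound:
  assumes Q: "stochastic Q" and J: "finite J"
    and covers: "\<And>ys. length ys = L \<Longrightarrow> \<forall>j\<in>J. \<not> E j ys \<Longrightarrow> A ys"
    and E: "\<And>j. j \<in> J \<Longrightarrow> chain_exp Q L (\<lambda>ys. of_bool (E j ys)) x \<le> \<beta> j"
    and \<beta>: "(\<Sum>j\<in>J. \<beta> j) \<le> a"
  shows "1 - a \<le> chain_exp Q L (\<lambda>ys. of_bool (A ys)) x"
proof -
  have Q0: "0 \<le> Q x y" for x y using Q by (simp add: stochastic_def)
  have "1 - of_bool (A ys) \<le> (\<Sum>j\<in>J. of_bool (E j ys) :: real)" if "length ys = L" for ys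
  proof (cases "\<exists>j\<in>J. E j ys")
    case True
    then obtain j where "j \<in> J" "E j ys" by blast
    then have "1 \<le> (\<Sum>j\<in>J. of_bool (E j ys) :: real)"
      using member_le_sum[of j J "\<lambda>j. of_bool (E j ys) :: real"] J by simp
    then show ?thesis by simp
  next
    case False
    then show ?thesis using covers[OF that] by (simp add: sum_nonneg)
  qed
  then have "chain_exp Q L (\<lambda>ys. 1 - of_bool (A ys)) x \<le> chain_exp Q L (\<lambda>ys. \<Sum>j\<in>J. of_bool (E j ys)) x"
    by (rule chain_exp_mono[OF Q0])
  also have "\<dots> = (\<Sum>j\<in>J. chain_exp Q L (\<lambda>ys. of_bool (E j ys)) x)"
    by (rule chain_exp_sum[OF J])
  also have "\<dots> \<le> a"
    using E \<beta> by (meson order.trans sum_mono)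
  finally show ?thesis
    by (simp only: chain_exp_diff chain_exp_const[OF Q])
qed

lemma chain_exp_append:
  "chain_exp Q (a + b) F x =
     chain_exp Q a (\<lambda>ys. chain_exp Q b (\<lambda>zs. F (ys @ zs)) (last (x # ys))) x"
  by (induction a arbitrary: F x) simp_all

lemma mpow_Suc_left: "mpow Q (Suc a) x y = (\<Sum>u\<in>UNIV. Q x u * mpow Q a u y)"
proof (induction a arbitrary: y)
  case 0
  show ?case by (simp add: if_distrib[of "\<lambda>a. a * _"] if_distrib[of "\<lambda>a. _ * a"] cong: if_cong)
next
  case (Suc a)
  have "mpow Q (Suc (Suc a)) x y = (\<Sum>v\<in>UNIV. \<Sum>u\<in>UNIV. Q x u * mpow Q a u v * Q v y)"
    using Suc by (simp add: sum_distrib_right)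
  also have "\<dots> = (\<Sum>u\<in>UNIV. Q x u * (\<Sum>v\<in>UNIV. mpow Q a u v * Q v y))"
    by (subst sum.swap) (simp add: sum_distrib_left mult.assoc)
  finally show ?case by simp
qed

lemma stochastic_mpow:
  assumes "stochastic P"
  shows "stochastic (mpow P k)"
  unfolding stochastic_def
proof (induction k)
  case (Suc k)
  have "(\<Sum>y\<in>UNIV. mpow P (Suc k) x y) = (\<Sum>u\<in>UNIV. mpow P k x u * (\<Sum>y\<in>UNIV. P u y))" for x
    by (simp add: sum_distrib_left) (rule sum.swap)
  then show ?case using Suc assms unfolding stochastic_def by (simp add: sum_nonneg)
qed simp

lemma chain_exp_last:
  "chain_exp Q a (\<lambda>ys. g (last (x # ys))) x = (\<Sum>y\<in>UNIV. mpow Q a x y * g y)"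
proof (induction a arbitrary: x)
  case 0
  show ?case by (simp add: if_distrib[of "\<lambda>a. a * _"] cong: if_cong)
next
  case (Suc a)
  have "chain_exp Q (Suc a) (\<lambda>ys. g (last (x # ys))) x
      = (\<Sum>y\<in>UNIV. \<Sum>v\<in>UNIV. Q x y * mpow Q a y v * g v)"
    using Suc by (simp add: sum_distrib_left mult.assoc)
  also have "\<dots> = (\<Sum>v\<in>UNIV. mpow Q (Suc a) x v * g v)"
    unfolding mpow_Suc_left by (subst sum.swap) (simp add: sum_distrib_right)
  finally show ?case .
qed

fun skeleton :: "nat \<Rightarrow> nat \<Rightarrow> 'a list \<Rightarrow> 'a list" where
  "skeleton K 0 ys = []"
| "skeleton K (Suc k) ys = ys ! (K - 1) # skeleton K k (drop K ys)"

lemma length_skeleton [simp]: "length (skeleton K k ys) = k"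
  by (induction k arbitrary: ys) auto

lemma nth_skeleton:
  "l < k \<Longrightarrow> k * K \<le> length ys \<Longrightarrow> skeleton K k ys ! l = ys ! (l * K + (K - 1))"
proof (induction k arbitrary: l ys)
  case (Suc k)
  then show ?case by (cases l) (auto simp: nth_drop algebra_simps)
qed simp

lemma skeleton_append:
  "K \<ge> 1 \<Longrightarrow> length ys = K * k \<Longrightarrow> skeleton K k (ys @ zs) = skeleton K k ys"
  by (induction k arbitrary: ys) (auto simp: nth_append)

lemma sum_list_skeleton:
  "k * K \<le> length ys \<Longrightarrow> sum_list (map h (skeleton K k ys)) = (\<Sum>l<k. h (ys ! (l * K + (K - 1))))"
  by (simp add: sum_list_sum_nth atLeast0LessThan nth_skeleton)

lemma chain_exp_skeleton:
  assumes "K \<ge> 1"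
  shows "chain_exp Q (K * k) (\<lambda>ys. F (skeleton K k ys)) x = chain_exp (mpow Q K) k F x"
proof (induction k arbitrary: F x)
  case (Suc k)
  have "chain_exp Q (K * Suc k) (\<lambda>ys. F (skeleton K (Suc k) ys)) x
     = chain_exp Q K (\<lambda>ys. chain_exp Q (K * k) (\<lambda>zs. F (skeleton K (Suc k) (ys @ zs))) (last (x # ys))) x"
    using chain_exp_append[of Q K "K * k"] by simp
  also have "\<dots> = chain_exp Q K (\<lambda>ys. (\<lambda>u. chain_exp (mpow Q K) k (\<lambda>zs. F (u # zs)) u) (last (x # ys))) x"
  proof (rule chain_exp_cong)
    fix ys :: "'a list" assume l: "length ys = K"
    then have skel: "skeleton K (Suc k) (ys @ zs) = last (x # ys) # skeleton K k zs" for zs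
      using assms by (cases ys rule: rev_cases) (auto simp: nth_append)
    show "chain_exp Q (K * k) (\<lambda>zs. F (skeleton K (Suc k) (ys @ zs))) (last (x # ys)) =
        chain_exp (mpow Q K) k (\<lambda>zs. F (last (x # ys) # zs)) (last (x # ys))"
      unfolding skel by (rule Suc.IH[of "\<lambda>zs. F (last (x # ys) # zs)"])
  qed
  also have "\<dots> = chain_exp (mpow Q K) (Suc k) F x"
    by (subst chain_exp_last) simp
  finally show ?case .
qed simp

lemma chain_exp_prefix:
  assumes Q: "stochastic Q" and F: "\<And>ys zs. length ys = a \<Longrightarrow> F (ys @ zs) = F' ys"
  shows "chain_exp Q (a + b) F x = chain_exp Q a F' x"
  unfolding chain_exp_append by (rule chain_exp_cong) (simp add: F chain_exp_const[OF Q] del: last.simps)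

lemma chain_exp_skeleton_window_le:
  assumes P: "stochastic P" and K: "K \<ge> 1" and len: "D + K * k \<le> L"
    and bound: "\<And>u. chain_exp (mpow P K) k F u \<le> \<beta>"
  shows "chain_exp P L (\<lambda>ys. F (skeleton K k (drop D ys))) x \<le> \<beta>"
proof -
  obtain R where L: "L = D + (K * k + R)" using len by (metis add.assoc le_iff_add)
  have P0: "\<And>x y. 0 \<le> P x y" using P unfolding stochastic_def by auto
  have window: "chain_exp P (K * k + R) (\<lambda>zs. F (skeleton K k zs)) u = chain_exp (mpow P K) k F u" for u
    by (simp add: chain_exp_prefix[OF P] skeleton_append[OF K] chain_exp_skeleton[OF K])
  have "chain_exp P L (\<lambda>ys. F (skeleton K k (drop D ys))) x
      = chain_exp P D (\<lambda>ys. chain_exp (mpow P K) k F (last (x # ys))) x"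
    unfolding L chain_exp_append[of P D] by (rule chain_exp_cong) (simp add: window del: last.simps)
  also have "\<dots> \<le> chain_exp P D (\<lambda>_. \<beta>) x"
    by (rule chain_exp_mono[OF P0 bound])
  also have "\<dots> = \<beta>" by (rule chain_exp_const[OF P])
  finally show ?thesis .
qed

section \<open>Coupling with independent samples\<close>

lemma sum_diff_mult_le_tv_dist:
  fixes q p :: "'s::finite \<Rightarrow> real"
  assumes "\<And>y. 0 \<le> \<phi> y" "\<And>y. \<phi> y \<le> 1"
  shows "(\<Sum>y\<in>UNIV. (q y - p y) * \<phi> y) \<le> tv_dist q p"
proof -
  define A where "A = {y. p y < q y}"
  have "(\<Sum>y\<in>UNIV. (q y - p y) * \<phi> y) \<le> (\<Sum>y\<in>UNIV. if y \<in> A then q y - p y else 0)"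
    using assms unfolding A_def by (intro sum_mono) (auto simp: mult_le_0_iff intro: mult_left_le)
  also have "\<dots> = (\<Sum>y\<in>A. q y) - (\<Sum>y\<in>A. p y)"
    by (simp add: sum.If_cases sum_subtractf)
  also have "\<dots> \<le> tv_dist q p"
    unfolding tv_dist_def by (rule order.trans[OF abs_ge_self Max_ge]) auto
  finally show ?thesis .
qed

lemma tv_dist_nonneg: "0 \<le> tv_dist (q::'s::finite \<Rightarrow> real) p"
  using sum_diff_mult_le_tv_dist[of "\<lambda>_. 0" q p] by simp

lemma tv_dist_le_d_mix: "tv_dist (mpow P K x) mu \<le> d_mix P mu K"
  unfolding d_mix_def by (rule Max_ge) auto

lemma d_mix_nonneg: "0 \<le> d_mix P mu K"
  using tv_dist_le_d_mix[of P K undefined mu] tv_dist_nonneg[of "mpow P K undefined" mu] by linarith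

text \<open>The transition law is replaced by \<open>p\<close> one step at a time; for \<open>[0, 1]\<close>-valued
  functions each replacement costs at most the total-variation distance.\<close>

lemma chain_exp_le_iid_exp:
  assumes Q: "stochastic Q" and p: "stochastic (\<lambda>_. p)"
    and tv: "\<And>x. tv_dist (Q x) p \<le> d"
    and F01: "\<And>ys. 0 \<le> F ys \<and> F ys \<le> 1"
  shows "chain_exp Q k F x \<le> chain_exp (\<lambda>_. p) k F x' + real k * d"
  using F01
proof (induction k arbitrary: F x x')
  case (Suc k)
  define \<psi> where "\<psi> y = chain_exp (\<lambda>_. p) k (\<lambda>ys. F (y # ys)) y" for y
  have \<psi>: "0 \<le> \<psi> y \<and> \<psi> y \<le> 1" for y
    unfolding \<psi>_def by (rule chain_exp_bounds[OF p]) (use Suc.prems in auto)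
  have Q0: "0 \<le> Q x y" for y using Q unfolding stochastic_def by auto
  have Q1: "(\<Sum>y\<in>UNIV. Q x y) = 1" using Q unfolding stochastic_def by auto
  have "chain_exp Q (Suc k) F x \<le> (\<Sum>y\<in>UNIV. Q x y * (\<psi> y + real k * d))"
    unfolding chain_exp.simps \<psi>_def
    by (intro sum_mono mult_left_mono Suc.IH Q0) (use Suc.prems in auto)
  also have "\<dots> = (\<Sum>y\<in>UNIV. Q x y * \<psi> y) + real k * d"
    using Q1 by (simp add: distrib_left sum.distrib flip: sum_distrib_right)
  also have "(\<Sum>y\<in>UNIV. Q x y * \<psi> y) = (\<Sum>y\<in>UNIV. p y * \<psi> y) + (\<Sum>y\<in>UNIV. (Q x y - p y) * \<psi> y)"
    by (simp add: algebra_simps flip: sum.distrib)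
  also have "(\<Sum>y\<in>UNIV. (Q x y - p y) * \<psi> y) \<le> d"
    using sum_diff_mult_le_tv_dist[of \<psi> "Q x" p] \<psi> tv[of x] by auto
  finally show ?case unfolding \<psi>_def by (simp add: algebra_simps)
qed simp

section \<open>Tails of sums of independent bounded vectors\<close>

lemma cosh_le_exp_square: "cosh (x :: real) \<le> exp (x\<^sup>2 / 2)"
proof -
  define y where "y = \<bar>x\<bar>"
  have "- (2*y) * (1/2) + ln (1 + (1/2) * (exp (2*y) - 1)) \<le> (2*y)\<^sup>2 / 8"
    using Hoeffdings_lemma_aux[of "2*y" "1/2"] unfolding y_def by simp
  then have "ln ((1 + exp (2*y)) / 2) \<le> y + y\<^sup>2 / 2"
    by (simp add: power2_eq_square field_simps)
  then have "(1 + exp (2*y)) / 2 \<le> exp (y + y\<^sup>2 / 2)"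
    by (metis exp_le_cancel_iff exp_ln add_pos_pos exp_gt_zero half_gt_zero zero_less_one)
  then have "(1 + exp (2*y)) / 2 * exp (-y) \<le> exp (y + y\<^sup>2 / 2) * exp (-y)"
    by (rule mult_right_mono) simp
  then have "cosh y \<le> exp (y\<^sup>2 / 2)"
    by (simp add: cosh_field_def field_simps flip: exp_add)
  then show ?thesis unfolding y_def by (cases "x \<ge> 0") simp_all
qed

lemma Hoeffdings_lemma_finite:
  fixes Y :: "'s::finite \<Rightarrow> real"
  assumes p: "stochastic (\<lambda>_. p)"
    and mean: "(\<Sum>y\<in>UNIV. p y * Y y) = 0" and bound: "\<And>y. \<bar>Y y\<bar> \<le> c"
    and l: "l \<ge> 0"
  shows "(\<Sum>y\<in>UNIV. p y * exp (l * Y y)) \<le> exp (l\<^sup>2 * c\<^sup>2 / 2)"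
proof (cases "c = 0")
  case True
  then show ?thesis using p bound by (simp add: stochastic_def)
next
  case False
  then have c: "c > 0" using bound[of undefined] by auto
  have p0: "0 \<le> p y" and p1: "(\<Sum>y\<in>UNIV. p y) = 1" for y using p by (auto simp: stochastic_def)
  have convex: "exp (l * Y y) \<le> ((c - Y y) / (2*c)) * exp (- (l * c)) + ((c + Y y) / (2*c)) * exp (l * c)"
    for y
  proof -
    define t where "t = (c + Y y) / (2*c)"
    have t: "0 \<le> t" "t \<le> 1" using bound[of y] c by (auto simp: t_def field_simps abs_le_iff)
    have "(1 - t) *\<^sub>R (-c) + t *\<^sub>R c = Y y" "1 - t = (c - Y y) / (2*c)"
      using c by (simp_all add: t_def field_simps)
    then show ?thesis
      using convex_onD[OF convex_on_exp[OF l], of t "-c" c] t by (simp add: t_def)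
  qed
  have "(\<Sum>y\<in>UNIV. p y * exp (l * Y y))
     \<le> (\<Sum>y\<in>UNIV. p y * ((c - Y y) / (2*c) * exp (- (l * c)) + (c + Y y) / (2*c) * exp (l * c)))"
    by (intro sum_mono mult_left_mono convex p0)
  also have "\<dots> = (\<Sum>y\<in>UNIV. p y * cosh (l * c) + p y * Y y * (sinh (l * c) / c))"
    using c by (intro sum.cong refl) (simp add: cosh_field_def sinh_field_def field_simps)
  also have "\<dots> = (\<Sum>y\<in>UNIV. p y) * cosh (l * c) + (\<Sum>y\<in>UNIV. p y * Y y) * (sinh (l * c) / c)"
    by (simp add: sum.distrib sum_distrib_right sum_divide_distrib)
  also have "\<dots> = cosh (l * c)" using p1 mean by simp
  also have "\<dots> \<le> exp ((l * c)\<^sup>2 / 2)" by (rule cosh_le_exp_square)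
  finally show ?thesis by (simp add: power_mult_distrib)
qed

text \<open>A vector-valued Hoeffding bound via Pinelis' smoothing: \<open>s \<mapsto> sqrt (norm s\<^sup>2 + A)\<close> is a
  smooth proxy for the norm, so adding a bounded mean-zero increment raises its exponential
  moment by a deterministic factor only.\<close>

definition smooth_norm :: "real \<Rightarrow> 'v::real_inner \<Rightarrow> real" where
  "smooth_norm A s = sqrt ((norm s)\<^sup>2 + A)"

lemma smooth_norm_zero [simp]: "smooth_norm A 0 = sqrt A"
  by (simp add: smooth_norm_def)

lemma smooth_norm_pos: "A > 0 \<Longrightarrow> 0 < smooth_norm A s"
  unfolding smooth_norm_def by (simp add: add_nonneg_pos)

lemma sqrt_le_smooth_norm: "A \<ge> 0 \<Longrightarrow> sqrt A \<le> smooth_norm A s"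
  unfolding smooth_norm_def by simp

lemma norm_le_smooth_norm: "A \<ge> 0 \<Longrightarrow> norm s \<le> smooth_norm A s"
  unfolding smooth_norm_def by (simp add: real_le_rsqrt)

lemma smooth_norm_add_le:
  fixes s h :: "'v::real_inner"
  assumes A: "A > 0" and h: "norm h \<le> c"
  shows "smooth_norm A (s + h) \<le> smooth_norm A s + inner s h / smooth_norm A s + c\<^sup>2 / (2 * sqrt A)"
proof -
  define a where "a = smooth_norm A s"
  define b where "b = 2 * inner s h + (norm h)\<^sup>2"
  have a: "a > 0" "sqrt A \<le> a"
    using smooth_norm_pos[OF A] sqrt_le_smooth_norm[of A] A by (auto simp: a_def)
  have a2: "a\<^sup>2 = (norm s)\<^sup>2 + A"
    unfolding a_def smooth_norm_def using A by (simp add: add_nonneg_pos)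
  have norm_add: "(norm (s + h))\<^sup>2 = (norm s)\<^sup>2 + b"
    unfolding b_def by (simp add: power2_norm_eq_inner inner_add_left inner_add_right inner_commute)
  have "smooth_norm A (s + h) = sqrt (a\<^sup>2 + b)"
    unfolding smooth_norm_def a2 norm_add by (simp add: algebra_simps)
  also have "\<dots> \<le> a + b / (2 * a)"
  proof (rule real_le_lsqrt)
    have "0 \<le> (norm s)\<^sup>2 + 2 * A + (norm (s + h))\<^sup>2" using A by simp
    also have "\<dots> = 2 * a\<^sup>2 + b" unfolding a2 norm_add by simp
    also have "\<dots> = 2 * a * (a + b / (2 * a))"
      using a by (simp add: field_simps power2_eq_square)
    finally show "0 \<le> a + b / (2 * a)" using a by (simp add: zero_le_mult_iff)
    show "a\<^sup>2 + b \<le> (a + b / (2 * a))\<^sup>2"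
      using a by (simp add: power2_eq_square field_simps)
  qed
  also have "b / (2 * a) = inner s h / a + (norm h)\<^sup>2 / (2 * a)"
    using a unfolding b_def by (simp add: field_simps)
  also have "(norm h)\<^sup>2 / (2 * a) \<le> c\<^sup>2 / (2 * sqrt A)"
    using a h A by (intro frac_le power_mono) auto
  finally show ?thesis unfolding a_def by simp
qed

lemma exp_smooth_norm_add_le:
  fixes h :: "'s::finite \<Rightarrow> 'v::real_inner"
  assumes p: "stochastic (\<lambda>_. p)"
    and mean: "(\<Sum>y\<in>UNIV. p y *\<^sub>R h y) = 0" and h: "\<And>y. norm (h y) \<le> c"
    and A: "A > 0" and l: "l \<ge> 0"
  shows "(\<Sum>y\<in>UNIV. p y * exp (l * smooth_norm A (s + h y)))
     \<le> exp (l * smooth_norm A s) * exp (l * c\<^sup>2 / (2 * sqrt A) + l\<^sup>2 * c\<^sup>2 / 2)"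
proof -
  define a where "a = smooth_norm A s"
  have a: "a > 0" "norm s \<le> a"
    using smooth_norm_pos[OF A] norm_le_smooth_norm[of A] A by (auto simp: a_def)
  have p0: "0 \<le> p y" for y using p by (simp add: stochastic_def)
  define Y where "Y y = inner s (h y) / a" for y
  have Y_bound: "\<bar>Y y\<bar> \<le> c" for y
  proof -
    have "\<bar>inner s (h y)\<bar> \<le> a * c"
      using a h[of y] by (intro order.trans[OF Cauchy_Schwarz_ineq2] mult_mono) auto
    then show ?thesis using a unfolding Y_def by (simp add: field_simps abs_div)
  qed
  have Y_mean: "(\<Sum>y\<in>UNIV. p y * Y y) = 0"
  proof -
    have "(\<Sum>y\<in>UNIV. p y * Y y) = inner s (\<Sum>y\<in>UNIV. p y *\<^sub>R h y) / a"
      unfolding Y_def by (simp add: inner_sum_right sum_divide_distrib)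
    then show ?thesis using mean by simp
  qed
  have "exp (l * smooth_norm A (s + h y)) \<le> exp (l * (a + c\<^sup>2 / (2 * sqrt A))) * exp (l * Y y)" for y
  proof -
    have "smooth_norm A (s + h y) \<le> a + Y y + c\<^sup>2 / (2 * sqrt A)"
      using smooth_norm_add_le[OF A h[of y], of s] unfolding a_def Y_def by simp
    from mult_left_mono[OF this l] show ?thesis
      by (simp add: algebra_simps flip: exp_add)
  qed
  then have "(\<Sum>y\<in>UNIV. p y * exp (l * smooth_norm A (s + h y)))
     \<le> exp (l * (a + c\<^sup>2 / (2 * sqrt A))) * (\<Sum>y\<in>UNIV. p y * exp (l * Y y))"
    unfolding sum_distrib_left by (intro sum_mono) (simp add: p0 mult_left_mono mult.left_commute)
  also have "\<dots> \<le> exp (l * (a + c\<^sup>2 / (2 * sqrt A))) * exp (l\<^sup>2 * c\<^sup>2 / 2)"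
    by (intro mult_left_mono Hoeffdings_lemma_finite[OF p Y_mean Y_bound l]) auto
  also have "\<dots> = exp (l * a) * exp (l * c\<^sup>2 / (2 * sqrt A) + l\<^sup>2 * c\<^sup>2 / 2)"
    by (simp add: algebra_simps flip: exp_add)
  finally show ?thesis unfolding a_def .
qed

lemma iid_exp_smooth_norm_sum_le:
  fixes h :: "'s::finite \<Rightarrow> 'v::real_inner"
  assumes p: "stochastic (\<lambda>_. p)"
    and mean: "(\<Sum>y\<in>UNIV. p y *\<^sub>R h y) = 0" and h: "\<And>y. norm (h y) \<le> c"
    and A: "A > 0" and l: "l \<ge> 0"
  shows "chain_exp (\<lambda>_. p) k (\<lambda>xs. exp (l * smooth_norm A (s + sum_list (map h xs)))) x
     \<le> exp (l * smooth_norm A s) * exp (real k * (l * c\<^sup>2 / (2 * sqrt A) + l\<^sup>2 * c\<^sup>2 / 2))"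
proof (induction k arbitrary: s x)
  case (Suc k)
  define E where "E = l * c\<^sup>2 / (2 * sqrt A) + l\<^sup>2 * c\<^sup>2 / 2"
  have p0: "0 \<le> p y" for y using p by (simp add: stochastic_def)
  have "chain_exp (\<lambda>_. p) (Suc k) (\<lambda>xs. exp (l * smooth_norm A (s + sum_list (map h xs)))) x
      = (\<Sum>y\<in>UNIV. p y * chain_exp (\<lambda>_. p) k
           (\<lambda>xs. exp (l * smooth_norm A ((s + h y) + sum_list (map h xs)))) y)"
    by (simp add: add.assoc)
  also have "\<dots> \<le> (\<Sum>y\<in>UNIV. p y * exp (l * smooth_norm A (s + h y))) * exp (real k * E)"
    unfolding E_def sum_distrib_right
    by (intro sum_mono) (simp add: mult.assoc mult_left_mono p0 Suc.IH)
  also have "\<dots> \<le> (exp (l * smooth_norm A s) * exp E) * exp (real k * E)"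
    unfolding E_def by (intro mult_right_mono exp_smooth_norm_add_le[OF p mean h A l]) auto
  also have "\<dots> = exp (l * smooth_norm A s) * exp (real (Suc k) * E)"
    by (simp add: algebra_simps flip: exp_add)
  finally show ?case unfolding E_def .
qed simp

lemma iid_norm_sum_tail_le_exp:
  fixes h :: "'s::finite \<Rightarrow> 'v::real_inner"
  assumes p: "stochastic (\<lambda>_. p)"
    and mean: "(\<Sum>y\<in>UNIV. p y *\<^sub>R h y) = 0" and h: "\<And>y. norm (h y) \<le> c"
    and A: "A > 0" and l: "l \<ge> 0"
  shows "chain_exp (\<lambda>_. p) k (\<lambda>xs. of_bool (\<rho> < norm (sum_list (map h xs)))) x
     \<le> exp (- l * \<rho> + l * sqrt A + real k * (l * c\<^sup>2 / (2 * sqrt A) + l\<^sup>2 * c\<^sup>2 / 2))"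
proof -
  have p0: "0 \<le> p y" for y using p by (simp add: stochastic_def)
  have chernoff: "of_bool (\<rho> < norm s) \<le> exp (- l * \<rho>) * exp (l * smooth_norm A (0 + s))" for s :: 'v
  proof (cases "\<rho> < norm s")
    case True
    then have "l * \<rho> \<le> l * smooth_norm A s"
      using norm_le_smooth_norm[of A s] A l by (intro mult_left_mono) auto
    then show ?thesis using True by (simp flip: exp_add)
  qed simp
  have "chain_exp (\<lambda>_. p) k (\<lambda>xs. of_bool (\<rho> < norm (sum_list (map h xs)))) x
     \<le> chain_exp (\<lambda>_. p) k (\<lambda>xs. exp (- l * \<rho>) * exp (l * smooth_norm A (0 + sum_list (map h xs)))) x"
    by (intro chain_exp_mono chernoff) (simp add: p0)
  also have "\<dots> \<le> exp (- l * \<rho>) *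
      (exp (l * sqrt A) * exp (real k * (l * c\<^sup>2 / (2 * sqrt A) + l\<^sup>2 * c\<^sup>2 / 2)))"
    unfolding chain_exp_cmult
    using iid_exp_smooth_norm_sum_le[OF p mean h A l, of k 0 x] by (intro mult_left_mono) auto
  also have "\<dots> = exp (- l * \<rho> + l * sqrt A + real k * (l * c\<^sup>2 / (2 * sqrt A) + l\<^sup>2 * c\<^sup>2 / 2))"
    by (simp only: exp_add mult.assoc)
  finally show ?thesis .
qed

lemma iid_norm_sum_tail_le_gauss:
  fixes h :: "'s::finite \<Rightarrow> 'v::real_inner"
  assumes p: "stochastic (\<lambda>_. p)"
    and mean: "(\<Sum>y\<in>UNIV. p y *\<^sub>R h y) = 0" and h: "\<And>y. norm (h y) \<le> c"
    and c: "c > 0" and \<Lambda>: "\<Lambda> \<ge> 0" and n: "n \<ge> 1"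
    and \<rho>: "c * sqrt (real n) * (3/2 + sqrt (2 * \<Lambda>)) \<le> \<rho>"
  shows "chain_exp (\<lambda>_. p) (n - 1) (\<lambda>xs. of_bool (\<rho> < norm (sum_list (map h xs)))) x \<le> exp (- \<Lambda>)"
proof -
  \<comment> \<open>smoothing parameter \<open>T = n c\<^sup>2\<close> and Chernoff parameter \<open>l = \<tau> / T\<close> minimise the exponent\<close>
  define r where "r = sqrt (real n)"
  define T where "T = (c * r)\<^sup>2"
  define \<tau> where "\<tau> = c * r * sqrt (2 * \<Lambda>)"
  define l where "l = \<tau> / T"
  have r: "r > 0" "r\<^sup>2 = real n" unfolding r_def using n by auto
  have T: "T > 0" "sqrt T = c * r" unfolding T_def using c r by auto
  have l: "l \<ge> 0" unfolding l_def \<tau>_def using T c r \<Lambda> by simp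
  have "real (n - 1) * (c / (2 * r)) \<le> r\<^sup>2 * (c / (2 * r))"
    using c r n by (intro mult_right_mono) auto
  also have "\<dots> = c * r / 2" using r(1) by (simp add: power2_eq_square field_simps)
  finally have "l * (real (n - 1) * (c / (2 * r))) \<le> l * (c * r / 2)" using l by (rule mult_left_mono)
  moreover have "real (n - 1) * (l * c\<^sup>2 / (2 * sqrt T)) = l * (real (n - 1) * (c / (2 * r)))"
    unfolding T using c r by (simp add: power2_eq_square field_simps)
  moreover have "real (n - 1) * (l\<^sup>2 * c\<^sup>2 / 2) \<le> T * l\<^sup>2 / 2"
    unfolding T_def using c r n by (simp add: field_simps power_mult_distrib)
  moreover have "l * (3/2 * c * r + \<tau>) \<le> l * \<rho>"
    using mult_left_mono[OF \<rho> l] unfolding r_def \<tau>_def by (simp add: algebra_simps)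
  ultimately have "- l * \<rho> + l * sqrt T + real (n - 1) * (l * c\<^sup>2 / (2 * sqrt T) + l\<^sup>2 * c\<^sup>2 / 2)
      \<le> - l * (3/2 * c * r + \<tau>) + l * (c * r) + l * (c * r / 2) + T * l\<^sup>2 / 2"
    unfolding T(2) distrib_left by linarith
  also have "\<dots> = - \<tau>\<^sup>2 / (2 * T)"
    unfolding l_def using T by (simp add: field_simps power2_eq_square)
  also have "\<dots> = - \<Lambda>"
    unfolding \<tau>_def T_def using c r \<Lambda> n by (simp add: power_mult_distrib)
  finally have exponent: "- l * \<rho> + l * sqrt T + real (n - 1) * (l * c\<^sup>2 / (2 * sqrt T) + l\<^sup>2 * c\<^sup>2 / 2)
      \<le> - \<Lambda>" .
  have "chain_exp (\<lambda>_. p) (n - 1) (\<lambda>xs. of_bool (\<rho> < norm (sum_list (map h xs)))) x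
     \<le> exp (- l * \<rho> + l * sqrt T + real (n - 1) * (l * c\<^sup>2 / (2 * sqrt T) + l\<^sup>2 * c\<^sup>2 / 2))"
    by (rule iid_norm_sum_tail_le_exp[OF p mean h T(1) l])
  also have "\<dots> \<le> exp (- \<Lambda>)" using exponent by simp
  finally show ?thesis .
qed

text \<open>The constant \<open>6\<close> absorbs both the drift term \<open>3/2 c sqrt n\<close> of the smoothing and one
  extra increment \<open>2 G\<close>, which the caller needs to discard the first, uncoupled state.\<close>

lemma iid_norm_sum_tail_le:
  fixes h :: "'s::finite \<Rightarrow> 'v::real_inner"
  assumes p: "stochastic (\<lambda>_. p)"
    and mean: "(\<Sum>y\<in>UNIV. p y *\<^sub>R h y) = 0" and h: "\<And>y. norm (h y) \<le> 2 * G"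
    and n: "n \<ge> 1" and \<delta>: "\<delta> > 0" and K: "K \<ge> 1"
  shows "chain_exp (\<lambda>_. p) (n - 1) (\<lambda>xs. of_bool
      (6 * G * sqrt (real n) * (1 + sqrt (ln (real K / \<delta>))) - 2 * G < norm (sum_list (map h xs)))) x
    \<le> \<delta> / real K"
    (is "chain_exp _ _ ?F _ \<le> _")
proof (cases "\<delta> / real K < 1 \<and> G > 0")
  case True
  define \<Lambda> where "\<Lambda> = ln (real K / \<delta>)"
  have \<Lambda>: "\<Lambda> > 0" "exp (- \<Lambda>) = \<delta> / real K"
    unfolding \<Lambda>_def using True \<delta> K by (simp_all add: exp_minus field_simps)
  define a where "a = G * sqrt (real n)"
  have a: "G \<le> a" "0 \<le> a * sqrt \<Lambda>"
    unfolding a_def using True n \<Lambda> mult_left_mono[of 1 "sqrt (real n)" G] by simp_all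
  have "sqrt 2 \<le> 3/2" by (rule real_le_lsqrt) (auto simp: power2_eq_square)
  then have "sqrt (2 * \<Lambda>) \<le> 3/2 * sqrt \<Lambda>"
    unfolding real_sqrt_mult using \<Lambda> by (intro mult_right_mono) simp_all
  then have "a * sqrt (2 * \<Lambda>) \<le> 3/2 * (a * sqrt \<Lambda>)"
    using a True mult_left_mono[of "sqrt (2 * \<Lambda>)" "3/2 * sqrt \<Lambda>" a] by simp
  moreover have "2 * G * sqrt (real n) * (3/2 + sqrt (2 * \<Lambda>)) = 3 * a + 2 * (a * sqrt (2 * \<Lambda>))"
    "6 * G * sqrt (real n) * (1 + sqrt \<Lambda>) = 6 * a + 6 * (a * sqrt \<Lambda>)"
    unfolding a_def by (simp_all add: algebra_simps)
  ultimately have "2 * G * sqrt (real n) * (3/2 + sqrt (2 * \<Lambda>))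
      \<le> 6 * G * sqrt (real n) * (1 + sqrt \<Lambda>) - 2 * G"
    using a True by linarith
  from iid_norm_sum_tail_le_gauss[OF p mean h _ _ n this] True \<Lambda>
  show ?thesis unfolding \<Lambda>_def by simp
next
  case False
  have G: "G \<ge> 0" using order.trans[OF norm_ge_zero h] by simp
  show ?thesis
  proof (cases "G = 0")
    case True
    then have "sum_list (map h xs) = 0" for xs using h by (induction xs) auto
    then have "chain_exp (\<lambda>_. p) (n - 1) ?F x = chain_exp (\<lambda>_. p) (n - 1) (\<lambda>_. 0) x"
      using True by (intro chain_exp_cong) simp
    then show ?thesis using \<delta> unfolding chain_exp_const[OF p] by simp
  next
    case False
    then have "1 \<le> \<delta> / real K" using \<open>\<not> (\<delta> / real K < 1 \<and> G > 0)\<close> G by auto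
    moreover have "chain_exp (\<lambda>_. p) (n - 1) ?F x \<le> 1" using chain_exp_bounds[OF p, of ?F] by simp
    ultimately show ?thesis by linarith
  qed
qed

section \<open>Averages over a window of the chain\<close>

text \<open>The first state of the chain is not coupled; it only shifts the sum by one increment.\<close>

lemma chain_exp_norm_sum_tail_le:
  fixes h :: "'s::finite \<Rightarrow> 'v::real_inner"
  assumes Q: "stochastic Q" and p: "stochastic (\<lambda>_. p)"
    and tv: "\<And>x. tv_dist (Q x) p \<le> d"
    and mean: "(\<Sum>y\<in>UNIV. p y *\<^sub>R h y) = 0" and h: "\<And>y. norm (h y) \<le> 2 * G"
    and n: "n \<ge> 1" and \<delta>: "\<delta> > 0" and K: "K \<ge> 1"
  shows "chain_exp Q n (\<lambda>xs. of_bool (6 * G * sqrt (real n) * (1 + sqrt (ln (real K / \<delta>)))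
            < norm (sum_list (map h xs)))) u \<le> real (n - 1) * d + \<delta> / real K"
    (is "chain_exp _ _ (\<lambda>xs. of_bool (?r < _)) _ \<le> _")
proof -
  obtain k where k: "n = Suc k" using n by (cases n) auto
  have Q0: "0 \<le> Q u x" and Q1: "(\<Sum>x\<in>UNIV. Q u x) = 1" for x
    using Q by (auto simp: stochastic_def)
  have tail: "chain_exp Q k (\<lambda>xs. of_bool (?r < norm (sum_list (map h (x # xs))))) x
      \<le> \<delta> / real K + real k * d" for x
  proof -
    have "chain_exp Q k (\<lambda>xs. of_bool (?r < norm (sum_list (map h (x # xs))))) x
        \<le> chain_exp (\<lambda>_. p) k (\<lambda>xs. of_bool (?r < norm (sum_list (map h (x # xs))))) x + real k * d"
      by (rule chain_exp_le_iid_exp[OF Q p tv]) simp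
    also have "chain_exp (\<lambda>_. p) k (\<lambda>xs. of_bool (?r < norm (sum_list (map h (x # xs))))) x
        \<le> chain_exp (\<lambda>_. p) k (\<lambda>xs. of_bool (?r - 2 * G < norm (sum_list (map h xs)))) x"
    proof (rule chain_exp_mono)
      show "0 \<le> p y" for y using p by (simp add: stochastic_def)
      fix xs :: "'s list"
      have "norm (h x + sum_list (map h xs)) \<le> 2 * G + norm (sum_list (map h xs))"
        using norm_triangle_ineq[of "h x" "sum_list (map h xs)"] h[of x] by linarith
      then show "of_bool (?r < norm (sum_list (map h (x # xs))))
          \<le> (of_bool (?r - 2 * G < norm (sum_list (map h xs))) :: real)" by auto
    qed
    also have "\<dots> \<le> \<delta> / real K"
      using iid_norm_sum_tail_le[OF p mean h n \<delta> K] unfolding k by simp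
    finally show ?thesis by linarith
  qed
  have "chain_exp Q n (\<lambda>xs. of_bool (?r < norm (sum_list (map h xs)))) u
      = (\<Sum>x\<in>UNIV. Q u x * chain_exp Q k (\<lambda>xs. of_bool (?r < norm (sum_list (map h (x # xs))))) x)"
    unfolding k by simp
  also have "\<dots> \<le> (\<Sum>x\<in>UNIV. Q u x * (\<delta> / real K + real k * d))"
    by (intro sum_mono mult_left_mono tail Q0)
  also have "\<dots> = \<delta> / real K + real k * d" using Q1 by (simp flip: sum_distrib_right)
  finally show ?thesis unfolding k by simp
qed

lemma sum_lessThan_mult_interleave:
  fixes n K :: nat
  shows "(\<Sum>i<n * K. b i) = (\<Sum>j<K. \<Sum>l<n. b (l * K + j))"
proof -
  have "(\<Sum>i<n * K. b i) = (\<Sum>l<n. sum b {l * K..<l * K + K})"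
    by (rule sum.nat_group[symmetric])
  also have "\<dots> = (\<Sum>l<n. \<Sum>j<K. b (l * K + j))"
  proof (rule sum.cong[OF refl])
    fix l
    have "sum b {0 + l * K..<K + l * K} = (\<Sum>j\<in>{0..<K}. b (j + l * K))"
      by (rule sum.shift_bounds_nat_ivl)
    then show "sum b {l * K..<l * K + K} = (\<Sum>j<K. b (l * K + j))"
      by (simp add: atLeast0LessThan add.commute)
  qed
  also have "\<dots> = (\<Sum>j<K. \<Sum>l<n. b (l * K + j))" by (rule sum.swap)
  finally show ?thesis .
qed

lemma norm_sum_le_interleaved:
  fixes b :: "nat \<Rightarrow> 'v::real_normed_vector"
  assumes K: "K \<ge> 1" and b: "\<And>i. norm (b i) \<le> c"
    and residues: "\<And>j. j < K \<Longrightarrow> norm (\<Sum>l<m div K. b (l * K + j)) \<le> r"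
  shows "norm (\<Sum>i<m. b i) \<le> real K * r + real (m mod K) * c"
proof -
  define n where "n = m div K"
  have nK: "n * K \<le> m" and m: "m = n * K + m mod K" unfolding n_def by simp_all
  have "(\<Sum>i<m. b i) = (\<Sum>i<n * K. b i) + (\<Sum>i\<in>{n * K..<m}. b i)"
    using sum.atLeastLessThan_concat[of 0 "n * K" m b] nK by (simp add: atLeast0LessThan)
  also have "(\<Sum>i<n * K. b i) = (\<Sum>j<K. \<Sum>l<n. b (l * K + j))"
    by (rule sum_lessThan_mult_interleave)
  finally have "norm (\<Sum>i<m. b i)
      \<le> (\<Sum>j<K. norm (\<Sum>l<n. b (l * K + j))) + (\<Sum>i\<in>{n * K..<m}. norm (b i))"
    by (metis add_mono norm_sum norm_triangle_le)
  also have "\<dots> \<le> (\<Sum>j<K. r) + (\<Sum>i\<in>{n * K..<m}. c)"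
    using residues b unfolding n_def by (intro add_mono sum_mono) auto
  moreover have "real m = real n * real K + real (m mod K)"
    using m by (metis of_nat_add of_nat_mult)
  ultimately show ?thesis using nK by (simp add: of_nat_diff)
qed

lemma norm_window_average_le:
  fixes h :: "'s \<Rightarrow> 'v::real_normed_vector"
  assumes K: "1 \<le> K" "K \<le> m" and len: "length ys = K - 1 + m"
    and h: "\<And>y. norm (h y) \<le> 2 * G"
    and skeleton_sums: "\<And>j. j < K \<Longrightarrow> norm (sum_list (map h (skeleton K (m div K) (drop j ys)))) \<le> r"
  shows "norm ((1 / real m) *\<^sub>R (\<Sum>i<m. h (ys ! (K - 1 + i))))
    \<le> r / real (m div K) + 2 * G * real K / real m"
proof -
  define n where "n = m div K"
  have n: "n \<ge> 1" "n * K \<le> m" "real K * real n \<le> real m"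
    unfolding n_def using K div_le_mono[of K m K] by (simp_all flip: of_nat_mult)
  have m: "real m > 0" using K by simp
  have residues: "norm (\<Sum>l<m div K. h (ys ! (K - 1 + (l * K + j)))) \<le> r" if j: "j < K" for j
  proof -
    have "n * K \<le> length (drop j ys)" using len n j by simp
    then have "sum_list (map h (skeleton K n (drop j ys))) = (\<Sum>l<n. h (ys ! (K - 1 + (l * K + j))))"
      using len j by (simp add: sum_list_skeleton nth_drop algebra_simps)
    then show ?thesis using skeleton_sums[OF j] unfolding n_def by simp
  qed
  have r: "r \<ge> 0" using residues[of 0] K norm_ge_zero by (meson le_less_trans less_one not_le)
  have "norm (\<Sum>i<m. h (ys ! (K - 1 + i))) \<le> real K * r + real (m mod K) * (2 * G)"
    by (rule norm_sum_le_interleaved[OF K(1) h residues])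
  also have "\<dots> \<le> real m * (r / real n) + real K * (2 * G)"
  proof (rule add_mono)
    show "real K * r \<le> real m * (r / real n)"
      using n r by (simp add: field_simps mult_left_mono)
    show "real (m mod K) * (2 * G) \<le> real K * (2 * G)"
      using K order.trans[OF norm_ge_zero h]
      by (intro mult_right_mono) (simp_all add: less_imp_le)
  qed
  finally show ?thesis using m unfolding n_def by (simp add: field_simps)
qed

lemma norm_sub_weighted_mean_le:
  assumes mu: "stochastic (\<lambda>_. mu)" and g: "\<And>s. norm (g s) \<le> G"
  shows "norm (g s - (\<Sum>y\<in>UNIV. mu y *\<^sub>R g y)) \<le> 2 * G"
proof -
  have "norm (\<Sum>y\<in>UNIV. mu y *\<^sub>R g y) \<le> (\<Sum>y\<in>UNIV. mu y * G)"
    using mu g by (intro order.trans[OF norm_sum] sum_mono) (simp add: stochastic_def mult_left_mono)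
  also have "\<dots> = G" using mu by (simp add: stochastic_def flip: sum_distrib_right)
  finally show ?thesis using norm_triangle_ineq4[of "g s" "\<Sum>y\<in>UNIV. mu y *\<^sub>R g y"] g[of s] by linarith
qed

lemma weighted_sum_centered_eq_0:
  fixes g :: "'s::finite \<Rightarrow> 'v::real_vector"
  assumes "stochastic (\<lambda>_. mu)"
  shows "(\<Sum>s\<in>UNIV. mu s *\<^sub>R (g s - (\<Sum>y\<in>UNIV. mu y *\<^sub>R g y))) = 0"
proof -
  have "(\<Sum>s\<in>UNIV. mu s *\<^sub>R (g s - c)) = (\<Sum>s\<in>UNIV. mu s *\<^sub>R g s) - (\<Sum>s\<in>UNIV. mu s) *\<^sub>R c" for c
    by (simp add: scaleR_diff_right sum_subtractf scaleR_sum_left)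
  then show ?thesis using assms by (simp add: stochastic_def)
qed

lemma chain_exp_window_average_ge:
  fixes g :: "'s::finite \<Rightarrow> 'v::real_inner"
  assumes P: "stochastic P" and mu: "stochastic (\<lambda>_. mu)"
    and K: "1 \<le> K" "K \<le> m"
    and \<delta>: "\<delta> > (real K * (real (m div K) - 1) + 1) * d_mix P mu K"
    and g: "\<And>s. norm (g s) \<le> G"
  shows "1 - \<delta> \<le> chain_exp P (K - 1 + m) (\<lambda>ys. of_bool
      (norm ((1 / real m) *\<^sub>R (\<Sum>i<m. g (ys ! (K - 1 + i))) - (\<Sum>s\<in>UNIV. mu s *\<^sub>R g s))
        \<le> 6 * G / sqrt (real (m div K)) *
            (1 + sqrt (ln (real K / (\<delta> - (real K * (real (m div K) - 1) + 1) * d_mix P mu K))))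
          + 2 * G * real K / real m)) x"
    (is "_ \<le> chain_exp _ ?L (\<lambda>ys. of_bool (?dev ys \<le> ?thr)) _")
proof -
  define n where "n = m div K"
  define d where "d = d_mix P mu K"
  define \<delta>' where "\<delta>' = \<delta> - (real K * (real n - 1) + 1) * d"
  define h where "h s = g s - (\<Sum>y\<in>UNIV. mu y *\<^sub>R g y)" for s
  define r where "r = 6 * G * sqrt (real n) * (1 + sqrt (ln (real K / \<delta>')))"
  have n: "n \<ge> 1" "n * K \<le> m" unfolding n_def using K div_le_mono[of K m K] by simp_all
  have \<delta>': "\<delta>' > 0" unfolding \<delta>'_def n_def d_def using \<delta> by simp
  have h: "norm (h s) \<le> 2 * G" for s unfolding h_def by (rule norm_sub_weighted_mean_le[OF mu g])
  have h_mean: "(\<Sum>s\<in>UNIV. mu s *\<^sub>R h s) = 0"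
    unfolding h_def by (rule weighted_sum_centered_eq_0[OF mu])
  have "6 * G * sqrt (real n) * X / real n = 6 * G / sqrt (real n) * X" for X
    using real_div_sqrt[of "real n"] n(1) by (simp add: field_simps)
  then have thr: "r / real n + 2 * G * real K / real m = ?thr"
    unfolding r_def \<delta>'_def d_def n_def by simp
  show ?thesis
  proof (rule chain_exp_union_bound[OF P finite_lessThan])
    fix ys :: "'s list"
    assume "length ys = ?L" and "\<forall>j\<in>{..<K}. \<not> r < norm (sum_list (map h (skeleton K n (drop j ys))))"
    from norm_window_average_le[OF K this(1) h] this(2)
    have "norm ((1 / real m) *\<^sub>R (\<Sum>i<m. h (ys ! (K - 1 + i)))) \<le> ?thr"
      unfolding thr[symmetric] n_def by force
    then show "?dev ys \<le> ?thr"
      using K unfolding h_def by (simp add: sum_subtractf scaleR_diff_right sum_constant_scaleR)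
  next
    fix j assume j: "j \<in> {..<K}"
    have tail: "chain_exp (mpow P K) n (\<lambda>xs. of_bool (r < norm (sum_list (map h xs)))) u
        \<le> real (n - 1) * d + \<delta>' / real K" for u
      unfolding r_def d_def
      by (rule chain_exp_norm_sum_tail_le[OF stochastic_mpow[OF P] mu tv_dist_le_d_mix h_mean h n(1) \<delta>' K(1)])
    show "chain_exp P ?L (\<lambda>ys. of_bool (r < norm (sum_list (map h (skeleton K n (drop j ys)))))) x
        \<le> real (n - 1) * d + \<delta>' / real K"
      by (rule chain_exp_skeleton_window_le[OF P K(1) _ tail]) (use j n in \<open>simp add: mult.commute\<close>)
  next
    have "(\<Sum>j<K. real (n - 1) * d + \<delta>' / real K) = \<delta> - d"
      using K n unfolding \<delta>'_def by (simp add: of_nat_diff field_simps)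
    then show "(\<Sum>j<K. real (n - 1) * d + \<delta>' / real K) \<le> \<delta>"
      using d_mix_nonneg unfolding d_def by simp
  qed
qed

section \<open>Conditioning on a countably-valued observation\<close>

lemma measure_Int_UN_ge:
  assumes M: "finite_measure M" and I: "countable I" and disj: "disjoint_family_on A I"
    and A: "\<And>i. i \<in> I \<Longrightarrow> A i \<in> sets M" and BA: "\<And>i. i \<in> I \<Longrightarrow> B \<inter> A i \<in> sets M"
    and bound: "\<And>i. i \<in> I \<Longrightarrow> a * measure M (A i) \<le> measure M (B \<inter> A i)"
  shows "a * measure M (\<Union>i\<in>I. A i) \<le> measure M (B \<inter> (\<Union>i\<in>I. A i))"
proof (cases "a \<le> 0")
  case True
  then show ?thesis by (meson measure_nonneg mult_nonpos_nonneg order.trans)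
next
  case False
  interpret finite_measure M by (rule M)
  have disj_B: "disjoint_family_on (\<lambda>i. B \<inter> A i) I"
    using disj unfolding disjoint_family_on_def by blast
  have "ennreal a * emeasure M (\<Union>i\<in>I. A i) = (\<integral>\<^sup>+i. ennreal a * emeasure M (A i) \<partial>count_space I)"
    by (simp add: emeasure_UN_countable[OF A I disj] nn_integral_cmult)
  also have "\<dots> \<le> (\<integral>\<^sup>+i. emeasure M (B \<inter> A i) \<partial>count_space I)"
  proof (rule nn_integral_mono)
    fix i assume "i \<in> space (count_space I)"
    then have "ennreal (a * measure M (A i)) \<le> ennreal (measure M (B \<inter> A i))"
      using bound by (intro ennreal_leI) simp
    then show "ennreal a * emeasure M (A i) \<le> emeasure M (B \<inter> A i)"
      using False by (simp add: emeasure_eq_measure ennreal_mult)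
  qed
  also have "\<dots> = emeasure M (\<Union>i\<in>I. B \<inter> A i)"
    by (rule emeasure_UN_countable[OF BA I disj_B, symmetric])
  also have "(\<Union>i\<in>I. B \<inter> A i) = B \<inter> (\<Union>i\<in>I. A i)" by blast
  finally have "ennreal (a * measure M (\<Union>i\<in>I. A i)) \<le> ennreal (measure M (B \<inter> (\<Union>i\<in>I. A i)))"
    using False by (simp add: emeasure_eq_measure ennreal_mult)
  then show ?thesis by (metis ennreal_le_iff measure_nonneg)
qed

lemma integral_indicator_real_cond_exp_indicator:
  assumes M: "finite_measure M" and F: "subalgebra M F" and B: "B \<in> sets M" and D: "D \<in> sets F"
  shows "(\<integral>x. indicator D x * real_cond_exp M F (indicator B) x \<partial>M) = measure M (B \<inter> D)"
proof -
  interpret finite_measure_subalgebra M F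
    using M F by (simp add: finite_measure_subalgebra_def finite_measure_subalgebra_axioms_def)
  have "integrable M (indicator B :: 'a \<Rightarrow> real)"
    using B by (simp add: emeasure_eq_measure)
  from real_cond_exp_intA[OF this D]
  have "(\<integral>x. indicator D x * real_cond_exp M F (indicator B) x \<partial>M) = (\<integral>x. indicator D x * indicator B x \<partial>M)"
    unfolding set_lebesgue_integral_def by simp
  also have "\<dots> = measure M (B \<inter> D)"
    using B D F sets.Int_space_eq1[of "B \<inter> D" M]
    by (auto simp: Int_commute subalgebra_def simp flip: indicator_inter_arith)
  finally show ?thesis .
qed

lemma AE_real_cond_exp_indicator_ge:
  assumes M: "finite_measure M" and F: "subalgebra M F" and B: "B \<in> sets M"
    and bound: "\<And>D. D \<in> sets F \<Longrightarrow> a * measure M D \<le> measure M (B \<inter> D)"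
  shows "AE x in M. a \<le> real_cond_exp M F (indicator B) x"
proof -
  interpret finite_measure_subalgebra M F
    using M F by (simp add: finite_measure_subalgebra_def finite_measure_subalgebra_axioms_def)
  define Y where "Y = real_cond_exp M F (indicator B)"
  define D where "D = {x\<in>space M. Y x < a}"
  have int_Y: "integrable M Y"
    unfolding Y_def using B by (intro real_cond_exp_int(1)) (simp add: emeasure_eq_measure)
  have "D = Y -` {..<a} \<inter> space F"
    unfolding D_def using F by (auto simp: subalgebra_def)
  also have "\<dots> \<in> sets F"
    unfolding Y_def by (rule measurable_sets[OF borel_measurable_cond_exp]) simp
  finally have D_F: "D \<in> sets F" .
  then have D_M: "D \<in> sets M" using F by (auto simp: subalgebra_def)
  define f where "f x = a * indicator D x - indicator D x * Y x" for x
  have f_nonneg: "0 \<le> f x" for x unfolding f_def D_def by (simp add: indicator_def)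
  have int_D_Y: "integrable M (\<lambda>x. indicator D x * Y x)"
    using integrable_mult_indicator[OF D_M int_Y] by simp
  have int_D: "integrable M (indicator D :: 'a \<Rightarrow> real)"
    using D_M by (simp add: emeasure_eq_measure)
  have int_f: "integrable M f"
    unfolding f_def by (intro Bochner_Integration.integrable_diff integrable_mult_right int_D int_D_Y)
  have "(\<integral>x. indicator D x * Y x \<partial>M) = measure M (B \<inter> D)"
    unfolding Y_def by (rule integral_indicator_real_cond_exp_indicator[OF M F B D_F])
  then have "integral\<^sup>L M f = a * measure M D - measure M (B \<inter> D)"
    unfolding f_def using D_M int_D int_D_Y by simp
  also have "\<dots> \<le> 0" using bound[OF D_F] by simp
  moreover have "0 \<le> integral\<^sup>L M f" using f_nonneg by simp
  ultimately have "integral\<^sup>L M f = 0" by linarith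
  then have "AE x in M. f x = 0"
    using integral_nonneg_eq_0_iff_AE[OF int_f] f_nonneg by simp
  with AE_space show ?thesis
  proof eventually_elim
    case (elim x)
    then show ?case by (cases "x \<in> D") (auto simp: f_def D_def Y_def)
  qed
qed

lemma measurable_vimage_algebra_eq:
  fixes f :: "'a \<Rightarrow> 'b::t1_space"
  assumes f: "f \<in> borel_measurable (vimage_algebra X g N)" and g: "g \<in> X \<rightarrow> space N"
    and x: "x \<in> X" and y: "y \<in> X" and eq: "g x = g y"
  shows "f y = f x"
proof -
  have "f -` {f x} \<inter> space (vimage_algebra X g N) \<in> sets (vimage_algebra X g N)"
    by (rule measurable_sets[OF f]) simp
  then obtain A where A: "f -` {f x} \<inter> X = g -` A \<inter> X"
    using g by (auto simp: sets_vimage_algebra2)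
  have "x \<in> g -` A \<inter> X" using x A by blast
  then have "y \<in> g -` A \<inter> X" using y eq by simp
  then show ?thesis using A by blast
qed

lemma AE_real_cond_exp_indicator_ge_atoms:
  fixes g :: "'a \<Rightarrow> 'c::countable"
  assumes M: "finite_measure M" and B: "B \<subseteq> space M"
    and atoms: "\<And>c. {x\<in>space M. g x = c} \<in> sets M"
    and B_atoms: "\<And>c. B \<inter> {x\<in>space M. g x = c} \<in> sets M"
    and bound: "\<And>c. a * measure M {x\<in>space M. g x = c} \<le> measure M (B \<inter> {x\<in>space M. g x = c})"
  shows "AE x in M. a \<le> real_cond_exp M (vimage_algebra (space M) g (count_space UNIV)) (indicator B) x"
proof (rule AE_real_cond_exp_indicator_ge[OF M])
  define atom where "atom c = {x\<in>space M. g x = c}" for c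
  have preimage: "g -` A \<inter> space M = (\<Union>c\<in>A. atom c)" for A
    unfolding atom_def by auto
  have atom_disj: "disjoint_family_on atom A" for A
    unfolding disjoint_family_on_def atom_def by auto
  have sets_F: "sets (vimage_algebra (space M) g (count_space UNIV)) = {g -` A \<inter> space M | A. True}"
    by (simp add: sets_vimage_algebra2)
  show "subalgebra M (vimage_algebra (space M) g (count_space UNIV))"
    unfolding subalgebra_def sets_F preimage
    using atoms by (auto simp: atom_def intro: sets.countable_UN'')
  have "B = (\<Union>c. B \<inter> atom c)" using B unfolding atom_def by auto
  also have "\<dots> \<in> sets M" using B_atoms unfolding atom_def by (intro sets.countable_UN'') auto
  finally show "B \<in> sets M" .
  fix D assume "D \<in> sets (vimage_algebra (space M) g (count_space UNIV))"
  then obtain A where D: "D = (\<Union>c\<in>A. atom c)" unfolding sets_F preimage by auto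
  have "a * measure M (\<Union>c\<in>A. atom c) \<le> measure M (B \<inter> (\<Union>c\<in>A. atom c))"
    by (rule measure_Int_UN_ge[OF M countableI_type atom_disj])
      (use atoms B_atoms bound in \<open>simp_all add: atom_def\<close>)
  then show "a * measure M D \<le> measure M (B \<inter> D)" unfolding D .
qed

section \<open>Cylinder events of the sampling process\<close>

definition state_cylinder :: "'a measure \<Rightarrow> (nat \<Rightarrow> 'a \<Rightarrow> 's) \<Rightarrow> nat \<Rightarrow> (nat \<Rightarrow> 's) \<Rightarrow> 'a set" where
  "state_cylinder M z k xs = {\<omega>\<in>space M. \<forall>i\<in>{1..k}. z i \<omega> = xs i}"

definition batch_cylinder :: "'a measure \<Rightarrow> (nat \<Rightarrow> 'a \<Rightarrow> nat) \<Rightarrow> nat \<Rightarrow> (nat \<Rightarrow> nat) \<Rightarrow> 'a set" where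
  "batch_cylinder M N t ns = {\<omega>\<in>space M. \<forall>s\<in>{1..<t}. N s \<omega> = ns s}"

definition states_after :: "(nat \<Rightarrow> 'a \<Rightarrow> 's) \<Rightarrow> nat \<Rightarrow> nat \<Rightarrow> 'a \<Rightarrow> 's list" where
  "states_after z k L \<omega> = map (\<lambda>j. z (Suc k + j) \<omega>) [0..<L]"

lemma length_states_after [simp]: "length (states_after z k L \<omega>) = L"
  by (simp add: states_after_def)

lemma nth_states_after [simp]: "j < L \<Longrightarrow> states_after z k L \<omega> ! j = z (Suc k + j) \<omega>"
  by (simp add: states_after_def)

lemma states_after_Suc: "states_after z k (Suc L) \<omega> = z (Suc k) \<omega> # states_after z (Suc k) L \<omega>"
  by (simp only: states_after_def map_upt_Suc) simp

lemma sets_state_eq: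
  "markov_chain_on M P z \<Longrightarrow> k \<ge> 1 \<Longrightarrow> {\<omega>\<in>space M. z k \<omega> = x} \<in> sets M"
  unfolding markov_chain_on_def by (auto intro: measurable_sets_Collect)

lemma sets_state_cylinder: "markov_chain_on M P z \<Longrightarrow> state_cylinder M z k xs \<in> sets M"
  unfolding state_cylinder_def by (intro sets.sets_Collect_finite_All sets_state_eq) auto

lemma sets_batch_cylinder: "batch_sizes M z N \<Longrightarrow> batch_cylinder M N t ns \<in> sets M"
  unfolding batch_cylinder_def batch_sizes_def
  by (intro sets.sets_Collect_finite_All) (auto intro: measurable_sets_Collect)

lemma sets_states_after_eq:
  assumes "markov_chain_on M P z"
  shows "{\<omega>\<in>space M. states_after z k L \<omega> = ys} \<in> sets M"
proof -
  have "{\<omega>\<in>space M. states_after z k L \<omega> = ys}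
      = {\<omega>\<in>space M. length ys = L \<and> (\<forall>j\<in>{..<L}. z (Suc k + j) \<omega> = ys ! j)}"
    by (auto simp: list_eq_iff_nth_eq)
  also have "\<dots> \<in> sets M"
    using assms by (intro sets.sets_Collect_conj sets.sets_Collect_finite_All sets_state_eq) auto
  finally show ?thesis .
qed

lemma measure_cylinder_Suc:
  assumes mc: "markov_chain_on M P z" and bs: "batch_sizes M z N" and k: "k \<ge> 1"
  shows "measure M (batch_cylinder M N t ns \<inter> state_cylinder M z (Suc k) xs)
       = measure M (batch_cylinder M N t ns \<inter> state_cylinder M z k xs) * P (xs k) (xs (Suc k))"
proof -
  have eq: "batch_cylinder M N t ns \<inter> state_cylinder M z j xs
      = {\<omega>\<in>space M. (\<forall>i\<in>{1..j}. z i \<omega> = xs i) \<and> (\<forall>s\<in>{1..t - 1}. N s \<omega> = ns s)}" for j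
    unfolding batch_cylinder_def state_cylinder_def by (cases t) auto
  show ?thesis
    using mc k bs unfolding eq batch_sizes_def markov_chain_on_def by (simp add: mult_ac)
qed

lemma state_cylinder_upd_Suc:
  "state_cylinder M z (Suc k) (xs(Suc k := y)) = state_cylinder M z k xs \<inter> {\<omega>. z (Suc k) \<omega> = y}"
  unfolding state_cylinder_def by (auto simp: atLeastAtMostSuc_conv)

lemma sum_lists_length_Suc:
  "(\<Sum>ys\<in>{ys :: 's::finite list. length ys = Suc L}. f ys) = (\<Sum>y\<in>UNIV. \<Sum>ys\<in>{ys. length ys = L}. f (y # ys))"
proof -
  have "{ys :: 's list. length ys = Suc L} = (\<lambda>(y, ys). y # ys) ` (UNIV \<times> {ys. length ys = L})"
    by (auto simp: length_Suc_conv)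
  moreover have "inj_on (\<lambda>(y, ys). y # ys) (UNIV \<times> {ys :: 's list. length ys = L})"
    by (auto simp: inj_on_def)
  ultimately show ?thesis
    by (simp add: sum.reindex sum.cartesian_product case_prod_beta')
qed

lemma sum_measure_cylinder_states_after:
  fixes P :: "'s::finite \<Rightarrow> 's \<Rightarrow> real"
  assumes mc: "markov_chain_on M P z" and bs: "batch_sizes M z N" and k: "k \<ge> 1"
  shows "(\<Sum>ys\<in>{ys. length ys = L}.
      measure M (batch_cylinder M N t ns \<inter> state_cylinder M z k xs \<inter> {\<omega>. states_after z k L \<omega> = ys}) * F ys)
    = measure M (batch_cylinder M N t ns \<inter> state_cylinder M z k xs) * chain_exp P L F (xs k)"
  using k
proof (induction L arbitrary: k xs F)
  case 0
  have "{ys :: 's list. length ys = 0} = {[]}" by auto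
  then show ?case by (simp add: states_after_def)
next
  case (Suc L)
  let ?C = "\<lambda>k xs. batch_cylinder M N t ns \<inter> state_cylinder M z k xs"
  have "(\<Sum>ys\<in>{ys. length ys = L}. measure M (?C k xs \<inter> {\<omega>. states_after z k (Suc L) \<omega> = y # ys}) * F (y # ys))
      = measure M (?C k xs) * P (xs k) y * chain_exp P L (\<lambda>ys. F (y # ys)) y" for y
  proof -
    have "?C k xs \<inter> {\<omega>. states_after z k (Suc L) \<omega> = y # ys}
        = ?C (Suc k) (xs(Suc k := y)) \<inter> {\<omega>. states_after z (Suc k) L \<omega> = ys}" for ys
      unfolding states_after_Suc state_cylinder_upd_Suc by auto
    then have "(\<Sum>ys\<in>{ys. length ys = L}.
          measure M (?C k xs \<inter> {\<omega>. states_after z k (Suc L) \<omega> = y # ys}) * F (y # ys))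
        = (\<Sum>ys\<in>{ys. length ys = L}.
          measure M (?C (Suc k) (xs(Suc k := y)) \<inter> {\<omega>. states_after z (Suc k) L \<omega> = ys}) * F (y # ys))"
      by simp
    also have "\<dots> = measure M (?C (Suc k) (xs(Suc k := y))) *
        chain_exp P L (\<lambda>ys. F (y # ys)) ((xs(Suc k := y)) (Suc k))"
      by (rule Suc.IH) simp
    also have "(xs(Suc k := y)) (Suc k) = y" by simp
    also have "measure M (?C (Suc k) (xs(Suc k := y))) = measure M (?C k xs) * P (xs k) y"
      using measure_cylinder_Suc[OF mc bs Suc.prems, of t ns "xs(Suc k := y)"]
      unfolding state_cylinder_upd_Suc by (simp add: Int_absorb2 state_cylinder_def)
    finally show ?thesis .
  qed
  then show ?case
    by (simp add: sum_lists_length_Suc sum_distrib_left mult.assoc)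
qed

lemma measure_cylinder_states_after:
  fixes P :: "'s::finite \<Rightarrow> 's \<Rightarrow> real"
  assumes M: "finite_measure M" and mc: "markov_chain_on M P z" and bs: "batch_sizes M z N"
    and k: "k \<ge> 1" and C: "C = batch_cylinder M N t ns \<inter> state_cylinder M z k xs"
  shows "{\<omega>\<in>C. \<Phi> (states_after z k L \<omega>)} \<in> sets M"
    and "measure M {\<omega>\<in>C. \<Phi> (states_after z k L \<omega>)}
      = measure M C * chain_exp P L (\<lambda>ys. of_bool (\<Phi> ys)) (xs k)"
proof -
  define S where "S = {ys. length ys = L \<and> \<Phi> ys}"
  have fin: "finite {ys :: 's list. length ys = L}"
    using finite_lists_length_eq[of "UNIV :: 's set" L] by simp
  then have "finite S" unfolding S_def by (rule rev_finite_subset) auto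
  have C_sets: "C \<in> sets M" unfolding C using sets_batch_cylinder[OF bs] sets_state_cylinder[OF mc] by blast
  have piece_sets: "C \<inter> {\<omega>. states_after z k L \<omega> = ys} \<in> sets M" for ys
  proof -
    have "C \<inter> {\<omega>. states_after z k L \<omega> = ys} = C \<inter> {\<omega>\<in>space M. states_after z k L \<omega> = ys}"
      using sets.sets_into_space[OF C_sets] by blast
    then show ?thesis using C_sets sets_states_after_eq[OF mc] by auto
  qed
  have eq: "{\<omega>\<in>C. \<Phi> (states_after z k L \<omega>)} = (\<Union>ys\<in>S. C \<inter> {\<omega>. states_after z k L \<omega> = ys})"
    unfolding S_def by auto
  show "{\<omega>\<in>C. \<Phi> (states_after z k L \<omega>)} \<in> sets M"
    unfolding eq using \<open>finite S\<close> piece_sets by blast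
  have "measure M {\<omega>\<in>C. \<Phi> (states_after z k L \<omega>)} = (\<Sum>ys\<in>S. measure M (C \<inter> {\<omega>. states_after z k L \<omega> = ys}))"
    unfolding eq using \<open>finite S\<close> piece_sets
    by (intro measure_finite_Union) (auto simp: disjoint_family_on_def finite_measure.emeasure_finite[OF M])
  also have "\<dots> = (\<Sum>ys\<in>{ys. length ys = L}.
      if \<Phi> ys then measure M (C \<inter> {\<omega>. states_after z k L \<omega> = ys}) else 0)"
    unfolding S_def using sum.inter_filter[OF fin] by simp
  also have "\<dots> = (\<Sum>ys\<in>{ys. length ys = L}.
      measure M (C \<inter> {\<omega>. states_after z k L \<omega> = ys}) * of_bool (\<Phi> ys))"
    by (intro sum.cong) auto
  also have "\<dots> = measure M C * chain_exp P L (\<lambda>ys. of_bool (\<Phi> ys)) (xs k)"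
    unfolding C by (rule sum_measure_cylinder_states_after[OF mc bs k])
  finally show "measure M {\<omega>\<in>C. \<Phi> (states_after z k L \<omega>)}
      = measure M C * chain_exp P L (\<lambda>ys. of_bool (\<Phi> ys)) (xs k)" .
qed

text \<open>Conditioning additionally on the next state lets the window start at a time \<open>\<ge> 1\<close>,
  where the Markov property applies even when no state has been observed yet.\<close>

lemma measure_cylinder_window_ge:
  fixes P :: "'s::finite \<Rightarrow> 's \<Rightarrow> real"
  assumes M: "finite_measure M" and mc: "markov_chain_on M P z" and bs: "batch_sizes M z N"
    and C: "C = batch_cylinder M N t ns \<inter> state_cylinder M z k xs"
    and bound: "\<And>x. a \<le> chain_exp P L (\<lambda>ys. of_bool (\<Phi> ys)) x"
    and B: "\<And>\<omega>. \<omega> \<in> C \<Longrightarrow> \<omega> \<in> B \<longleftrightarrow> \<Phi> (states_after z (Suc k) L \<omega>)"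
  shows "B \<inter> C \<in> sets M" and "a * measure M C \<le> measure M (B \<inter> C)"
proof -
  define C' where "C' y = batch_cylinder M N t ns \<inter> state_cylinder M z (Suc k) (xs(Suc k := y))" for y
  have C_UN: "C = (\<Union>y. C' y)" and B_C': "B \<inter> C' y = {\<omega>\<in>C' y. \<Phi> (states_after z (Suc k) L \<omega>)}" for y
    using B unfolding C C'_def state_cylinder_upd_Suc by auto
  have C'_sets: "C' y \<in> sets M" for y
    unfolding C'_def using sets_batch_cylinder[OF bs] sets_state_cylinder[OF mc] by blast
  have BC'_sets: "B \<inter> C' y \<in> sets M" for y
    unfolding B_C' by (rule measure_cylinder_states_after(1)[OF M mc bs _ C'_def]) simp
  show "B \<inter> C \<in> sets M"
    unfolding C_UN Int_UN_distrib using BC'_sets by (intro sets.countable_UN'') auto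
  have "a * measure M (C' y) \<le> measure M (B \<inter> C' y)" for y
  proof -
    have "measure M (B \<inter> C' y) = measure M (C' y) * chain_exp P L (\<lambda>ys. of_bool (\<Phi> ys)) y"
      unfolding B_C' using measure_cylinder_states_after(2)[OF M mc bs _ C'_def] by simp
    then show ?thesis using bound[of y] measure_nonneg[of M "C' y"] by (metis mult.commute mult_right_mono)
  qed
  moreover have "disjoint_family C'"
    unfolding disjoint_family_on_def C'_def state_cylinder_upd_Suc by auto
  ultimately show "a * measure M C \<le> measure M (B \<inter> C)"
    unfolding C_UN using C'_sets BC'_sets by (intro measure_Int_UN_ge[OF M]) auto
qed

definition history :: "(nat \<Rightarrow> 'a \<Rightarrow> 's) \<Rightarrow> (nat \<Rightarrow> 'a \<Rightarrow> nat) \<Rightarrow> nat \<Rightarrow> 'a \<Rightarrow> nat list \<times> 's list" where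
  "history z N t \<omega> = (map (\<lambda>s. N s \<omega>) [1..<t], map (\<lambda>k. z k \<omega>) [1..<Suc (S_before N t \<omega>)])"

lemma hist_sigma_eq_vimage_algebra:
  "hist_sigma M z N t = vimage_algebra (space M) (history z N t) (count_space UNIV)"
  unfolding hist_sigma_def history_def ..

lemma S_before_cong: "(\<And>s. s \<in> {1..<t} \<Longrightarrow> N s \<omega> = N s \<omega>') \<Longrightarrow> S_before N t \<omega> = S_before N t \<omega>'"
  unfolding S_before_def by (rule sum.cong) auto

lemma history_atom:
  "{\<omega>\<in>space M. history z N t \<omega> = history z N t \<omega>\<^sub>0}
    = batch_cylinder M N t (\<lambda>s. N s \<omega>\<^sub>0) \<inter> state_cylinder M z (S_before N t \<omega>\<^sub>0) (\<lambda>k. z k \<omega>\<^sub>0)"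
proof -
  have "history z N t \<omega> = history z N t \<omega>\<^sub>0 \<longleftrightarrow>
      (\<forall>s\<in>{1..<t}. N s \<omega> = N s \<omega>\<^sub>0) \<and> (\<forall>k\<in>{1..S_before N t \<omega>\<^sub>0}. z k \<omega> = z k \<omega>\<^sub>0)" for \<omega>
  proof (cases "\<forall>s\<in>{1..<t}. N s \<omega> = N s \<omega>\<^sub>0")
    case True
    then have "S_before N t \<omega> = S_before N t \<omega>\<^sub>0" by (intro S_before_cong) auto
    then show ?thesis using True by (auto simp: history_def atLeastLessThanSuc_atLeastAtMost)
  qed (auto simp: history_def)
  then show ?thesis unfolding batch_cylinder_def state_cylinder_def by auto
qed

lemma history_atom_bound:
  fixes P :: "'s::finite \<Rightarrow> 's \<Rightarrow> real" and w :: "'a \<Rightarrow> 'b::t1_space" and c :: "nat list \<times> 's list"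
  assumes M: "finite_measure M" and mc: "markov_chain_on M P z" and bs: "batch_sizes M z N"
    and w: "w \<in> borel_measurable (hist_sigma M z N t)"
    and B: "\<And>\<omega>. \<omega> \<in> space M \<Longrightarrow> \<omega> \<in> B \<longleftrightarrow> \<Phi> (w \<omega>) (states_after z (Suc (S_before N t \<omega>)) L \<omega>)"
    and bound: "\<And>\<omega> x. \<omega> \<in> space M \<Longrightarrow> a \<le> chain_exp P L (\<lambda>ys. of_bool (\<Phi> (w \<omega>) ys)) x"
  defines "A \<equiv> {\<omega>\<in>space M. history z N t \<omega> = c}"
  shows "A \<in> sets M" and "B \<inter> A \<in> sets M" and "a * measure M A \<le> measure M (B \<inter> A)"
proof -
  have "A \<in> sets M \<and> B \<inter> A \<in> sets M \<and> a * measure M A \<le> measure M (B \<inter> A)"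
  proof (cases "A = {}")
    case False
    then obtain \<omega>\<^sub>0 where \<omega>\<^sub>0: "\<omega>\<^sub>0 \<in> space M" "history z N t \<omega>\<^sub>0 = c" unfolding A_def by auto
    define s\<^sub>0 where "s\<^sub>0 = S_before N t \<omega>\<^sub>0"
    have A: "A = batch_cylinder M N t (\<lambda>s. N s \<omega>\<^sub>0) \<inter> state_cylinder M z s\<^sub>0 (\<lambda>k. z k \<omega>\<^sub>0)"
      unfolding A_def s\<^sub>0_def \<omega>\<^sub>0(2)[symmetric] by (rule history_atom)
    have "w \<omega> = w \<omega>\<^sub>0" if "\<omega> \<in> A" for \<omega>
    proof (rule measurable_vimage_algebra_eq[OF w[unfolded hist_sigma_eq_vimage_algebra]])
      show "history z N t \<omega>\<^sub>0 = history z N t \<omega>" "\<omega> \<in> space M"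
        using that \<omega>\<^sub>0 unfolding A_def by auto
    qed (use \<omega>\<^sub>0 in auto)
    moreover have "S_before N t \<omega> = s\<^sub>0" if "\<omega> \<in> A" for \<omega>
      using that unfolding A s\<^sub>0_def batch_cylinder_def by (auto intro: S_before_cong)
    ultimately have "\<omega> \<in> B \<longleftrightarrow> \<Phi> (w \<omega>\<^sub>0) (states_after z (Suc s\<^sub>0) L \<omega>)" if "\<omega> \<in> A" for \<omega>
      using B[of \<omega>] that unfolding A_def by auto
    moreover note measure_cylinder_window_ge[OF M mc bs A bound[OF \<omega>\<^sub>0(1)]]
    ultimately show ?thesis
      using A sets_batch_cylinder[OF bs] sets_state_cylinder[OF mc] by auto
  qed simp
  then show "A \<in> sets M" and "B \<inter> A \<in> sets M" and "a * measure M A \<le> measure M (B \<inter> A)"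
    by auto
qed

lemma AE_real_cond_exp_hist_sigma_ge:
  fixes P :: "'s::finite \<Rightarrow> 's \<Rightarrow> real" and w :: "'a \<Rightarrow> 'b::t1_space"
  assumes M: "finite_measure M" and mc: "markov_chain_on M P z" and bs: "batch_sizes M z N"
    and w: "w \<in> borel_measurable (hist_sigma M z N t)" and B_space: "B \<subseteq> space M"
    and B: "\<And>\<omega>. \<omega> \<in> space M \<Longrightarrow> \<omega> \<in> B \<longleftrightarrow> \<Phi> (w \<omega>) (states_after z (Suc (S_before N t \<omega>)) L \<omega>)"
    and bound: "\<And>\<omega> x. \<omega> \<in> space M \<Longrightarrow> a \<le> chain_exp P L (\<lambda>ys. of_bool (\<Phi> (w \<omega>) ys)) x"
  shows "AE \<omega> in M. a \<le> real_cond_exp M (hist_sigma M z N t) (indicator B) \<omega>"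
  unfolding hist_sigma_eq_vimage_algebra
proof (rule AE_real_cond_exp_indicator_ge_atoms[OF M B_space])
  note atoms = history_atom_bound[OF M mc bs w B bound]
  fix c
  show "{\<omega>\<in>space M. history z N t \<omega> = c} \<in> sets M" by (rule atoms(1))
  show "B \<inter> {\<omega>\<in>space M. history z N t \<omega> = c} \<in> sets M" by (rule atoms(2))
  show "a * measure M {\<omega>\<in>space M. history z N t \<omega> = c}
      \<le> measure M (B \<inter> {\<omega>\<in>space M. history z N t \<omega> = c})" by (rule atoms(3))
qed

section \<open>Concentration of the mini-batch gradient\<close>

lemma gradient_weighted_sum:
  fixes f :: "'v::real_inner \<Rightarrow> 's::finite \<Rightarrow> real"
  assumes f: "\<And>s. ((\<lambda>u. f u s) has_derivative (\<lambda>h. gradf s \<bullet> h)) (at v)"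
    and F: "((\<lambda>u. \<Sum>s\<in>UNIV. mu s * f u s) has_derivative (\<lambda>h. gradF \<bullet> h)) (at v)"
  shows "gradF = (\<Sum>s\<in>UNIV. mu s *\<^sub>R gradf s)"
proof -
  have "((\<lambda>u. \<Sum>s\<in>UNIV. mu s * f u s) has_derivative (\<lambda>h. (\<Sum>s\<in>UNIV. mu s *\<^sub>R gradf s) \<bullet> h)) (at v)"
    unfolding inner_sum_left inner_scaleR_left by (intro has_derivative_sum has_derivative_mult_right f)
  from has_derivative_unique[OF F this]
  have "(gradF - (\<Sum>s\<in>UNIV. mu s *\<^sub>R gradf s)) \<bullet> h = 0" for h
    by (metis inner_diff_left right_minus_eq)
  then show ?thesis by (metis inner_eq_zero_iff right_minus_eq)
qed

theorem lemmaA4: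
  fixes M :: "'a measure"
    and P :: "'s::finite \<Rightarrow> 's \<Rightarrow> real" and mu :: "'s \<Rightarrow> real"
    and z :: "nat \<Rightarrow> 'a \<Rightarrow> 's" and N :: "nat \<Rightarrow> 'a \<Rightarrow> nat"
    and Kset :: "'v::euclidean_space set"
    and f :: "'v \<Rightarrow> 's \<Rightarrow> real" and gradf :: "'v \<Rightarrow> 's \<Rightarrow> 'v" and gradF :: "'v \<Rightarrow> 'v"
    and G :: real and m K t :: nat and \<delta> :: real
    and w :: "'a \<Rightarrow> 'v"
  assumes "prob_space M"
    and "ergodic_chain P" and "stationary_dist P mu"
    and "markov_chain_on M P z" and "batch_sizes M z N"
    and "\<And>v s. ((\<lambda>u. f u s) has_derivative (\<lambda>h. gradf v s \<bullet> h)) (at v)"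
    and "\<And>v. ((\<lambda>u. \<Sum>s\<in>UNIV. mu s * f u s) has_derivative (\<lambda>h. gradF v \<bullet> h)) (at v)"
    and "\<And>v s. v \<in> Kset \<Longrightarrow> norm (gradf v s) \<le> G"
    and "t \<ge> 1"
    and "1 \<le> K" and "K \<le> m"
    and "\<delta> > (real K * (real (m div K) - 1) + 1) * d_mix P mu K"
    and "w \<in> borel_measurable (hist_sigma M z N t)"
    and "\<And>\<omega>. \<omega> \<in> space M \<Longrightarrow> w \<omega> \<in> Kset"
  shows "AE \<omega> in M. real_cond_exp M (hist_sigma M z N t)
           (indicator {\<omega>'\<in>space M.
              norm ((1 / real m) *\<^sub>R (\<Sum>i\<in>{1..m}. gradf (w \<omega>') (z (S_before N t \<omega>' + K + i) \<omega>'))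
                    - gradF (w \<omega>'))
              \<le> 6 * G / sqrt (real (m div K)) *
                  (1 + sqrt (ln (real K / (\<delta> - (real K * (real (m div K) - 1) + 1) * d_mix P mu K))))
                + 2 * G * real K / real m}) \<omega>
         \<ge> 1 - \<delta>"
    (is "AE \<omega> in M. _ (indicator {\<omega>'\<in>space M. norm (_ - _) \<le> ?thr}) \<omega> \<ge> _")
proof -
  have M: "finite_measure M" using assms(1) by (rule prob_space.finite_measure)
  have P: "stochastic P" using assms(2) by (simp add: ergodic_chain_def)
  have mu: "stochastic (\<lambda>_. mu)" using assms(3) by (simp add: stationary_dist_def stochastic_def)
  have gradF: "gradF v = (\<Sum>s\<in>UNIV. mu s *\<^sub>R gradf v s)" for v
    by (rule gradient_weighted_sum[OF assms(6) assms(7)])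
  define \<Phi> where "\<Phi> v ys \<longleftrightarrow> norm ((1 / real m) *\<^sub>R (\<Sum>i<m. gradf v (ys ! (K - 1 + i))) - gradF v) \<le> ?thr"
    for v ys
  show ?thesis
  proof (rule AE_real_cond_exp_hist_sigma_ge[OF M assms(4,5,13)])
    fix \<omega> x assume \<omega>: "\<omega> \<in> space M"
    then show "\<omega> \<in> {\<omega>'\<in>space M. norm ((1 / real m) *\<^sub>R (\<Sum>i\<in>{1..m}. gradf (w \<omega>') (z (S_before N t \<omega>' + K + i) \<omega>'))
        - gradF (w \<omega>')) \<le> ?thr} \<longleftrightarrow> \<Phi> (w \<omega>) (states_after z (Suc (S_before N t \<omega>)) (K - 1 + m) \<omega>)"
      using assms(10) unfolding \<Phi>_def by (simp add: sum.atLeast1_atMost_eq add.assoc)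
    have "norm (gradf (w \<omega>) s) \<le> G" for s using \<omega> assms(8,14) by blast
    from chain_exp_window_average_ge[OF P mu assms(10-12) this]
    show "1 - \<delta> \<le> chain_exp P (K - 1 + m) (\<lambda>ys. of_bool (\<Phi> (w \<omega>) ys)) x"
      unfolding \<Phi>_def gradF .
  qed blast
qed

end
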